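(* Let $R,R',R''$ be Hecke symmetries with the same parameter $q$ on finite dimensional spaces $V,V',V''$. Suppose that for each $n>1$ every indecomposable direct summand of the $\mathcal H_n$-module $V'^{\otimes n}$ is isomorphic to a direct summand of the $\mathcal H_n$-module $V^{\otimes n}$. Then the algebra homomorphism $\Delta_{R',R,R''}$ gives an isomorphism of algebras $A(R',R'')\cong A(R',R)\,\square_{A(R)}\,A(R,R'')$.
   Context: A Hecke symmetry with parameter $0\neq q\in\Bbbk$ on $V$ is an operator $R$ on $V\otimes V$ with $(R+\mathrm{id})(R-q\,\mathrm{id})=0$ and the braid relation; $V^{\otimes n}$ becomes an $\mathcal H_n(q)$-module with $T_i$ acting by $R$ on positions $i,i+1$. For Hecke symmetries $R_1,R_2$ (same $q$) on $W_1,W_2$, $A(R_2,R_1)$ is the quotient of $\mathbb T(W_2^*\otimes W_1)$ by the ideal generated by $\operatorname{Im}(\mathcal R-\mathrm{id})$, where $\mathcal R$ corresponds to $(R_2^* )^{-1}\otimes R_1$ under $(W_2^*\otimes W_1)^{\otimes2}\cong(W_2^* )^{\otimes2}\otimes W_1^{\otimes2}$ ($R_2^*$ the adjoint of $R_2$); one has $A_n(R_2,R_1)\cong\operatorname{Hom}_{\mathcal H_n}(W_1^{\otimes n},W_2^{\otimes n})^*$. $A(R)=A(R,R)$. The map $\Delta_{R',R,R''}:A(R',R'')\to A(R',R)\otimes A(R,R'')$ is defined in each degree $n$ as the map dual to composition $\operatorname{Hom}_{\mathcal H_n}(V^{\otimes n},V'^{\otimes n})\otimes\operatorname{Hom}_{\mathcal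 H_n}(V''^{\otimes n},V^{\otimes n})\to\operatorname{Hom}_{\mathcal H_n}(V''^{\otimes n},V'^{\otimes n})$; it is an algebra homomorphism, $A(R)$ is a bialgebra with comultiplication $\Delta_{R,R,R}$, and $A(R',R)$, $A(R,R'')$ are a right, resp. left, $A(R)$-comodule via $\Delta_{R',R,R}$, resp. $\Delta_{R,R,R''}$. For a coalgebra $C$, right comodule $X$ (coaction $\rho$) and left comodule $Y$ (coaction $\lambda$), the cotensor product $X\square_CY$ is the kernel of $\rho\otimes\mathrm{id}-\mathrm{id}\otimes\lambda:X\otimes Y\to X\otimes C\otimes Y$. *)

theory Defs
  imports Main
begin

text \<open>Concrete coordinates: a finite dimensional space V is k^d with basis x_0..x_(d-1).
  V^(tensor n) is the space of functions on words of length n over {..<d}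
  (vanishing outside these words). A Hecke symmetry R on V is given by its matrix:
  R(x_c tensor x_e) = sum over a,b of R a b c e times x_a tensor x_b.\<close>

definition words :: "nat \<Rightarrow> nat \<Rightarrow> nat list set" where
  "words d n = {w. length w = n \<and> set w \<subseteq> {..<d}}"

definition tspace :: "nat \<Rightarrow> nat \<Rightarrow> (nat list \<Rightarrow> 'k::zero) set" where
  "tspace d n = {v. \<forall>w. w \<notin> words d n \<longrightarrow> v w = 0}"

definition Rop :: "(nat \<Rightarrow> nat \<Rightarrow> nat \<Rightarrow> nat \<Rightarrow> 'k::comm_ring_1) \<Rightarrow> nat \<Rightarrow> nat \<Rightarrow> nat
    \<Rightarrow> (nat list \<Rightarrow> 'k) \<Rightarrow> nat list \<Rightarrow> 'k" where
  "Rop R d n i v = (\<lambda>w. if w \<in> words d n then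
       (\<Sum>c<d. \<Sum>e<d. R (w!i) (w!Suc i) c e * v (w[i := c, Suc i := e])) else 0)"

definition hecke_symmetry :: "'k::field \<Rightarrow> nat \<Rightarrow> (nat \<Rightarrow> nat \<Rightarrow> nat \<Rightarrow> nat \<Rightarrow> 'k) \<Rightarrow> bool" where
  "hecke_symmetry q d R \<longleftrightarrow> q \<noteq> 0
     \<and> (\<forall>v\<in>tspace d 2. Rop R d 2 0 (Rop R d 2 0 v) = (\<lambda>w. (q - 1) * Rop R d 2 0 v w + q * v w))
     \<and> (\<forall>v\<in>tspace d 3. Rop R d 3 0 (Rop R d 3 1 (Rop R d 3 0 v))
                       = Rop R d 3 1 (Rop R d 3 0 (Rop R d 3 1 v)))"

text \<open>H_n-submodules of V^(tensor n): subspaces stable under all T_i (the T_i generate H_n).\<close>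
definition hsubmod :: "(nat \<Rightarrow> nat \<Rightarrow> nat \<Rightarrow> nat \<Rightarrow> 'k::field) \<Rightarrow> nat \<Rightarrow> nat \<Rightarrow> (nat list \<Rightarrow> 'k) set \<Rightarrow> bool" where
  "hsubmod R d n U \<longleftrightarrow> U \<subseteq> tspace d n \<and> (\<lambda>w. 0) \<in> U
     \<and> (\<forall>u\<in>U. \<forall>v\<in>U. (\<lambda>w. u w + v w) \<in> U)
     \<and> (\<forall>c. \<forall>u\<in>U. (\<lambda>w. c * u w) \<in> U)
     \<and> (\<forall>i. Suc i < n \<longrightarrow> (\<forall>u\<in>U. Rop R d n i u \<in> U))"

definition hsummand :: "(nat \<Rightarrow> nat \<Rightarrow> nat \<Rightarrow> nat \<Rightarrow> 'k::field) \<Rightarrow> nat \<Rightarrow> nat \<Rightarrow> (nat list \<Rightarrow> 'k) set \<Rightarrow> bool" where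
  "hsummand R d n U \<longleftrightarrow> hsubmod R d n U \<and>
     (\<exists>U'. hsubmod R d n U' \<and> U \<inter> U' = {\<lambda>w. 0}
        \<and> (\<forall>v\<in>tspace d n. \<exists>u\<in>U. \<exists>u'\<in>U'. v = (\<lambda>w. u w + u' w)))"

definition hindec :: "(nat \<Rightarrow> nat \<Rightarrow> nat \<Rightarrow> nat \<Rightarrow> 'k::field) \<Rightarrow> nat \<Rightarrow> nat \<Rightarrow> (nat list \<Rightarrow> 'k) set \<Rightarrow> bool" where
  "hindec R d n U \<longleftrightarrow> U \<noteq> {\<lambda>w. 0} \<and>
     \<not> (\<exists>U1 U2. hsubmod R d n U1 \<and> hsubmod R d n U2 \<and> U1 \<subseteq> U \<and> U2 \<subseteq> U
          \<and> U1 \<noteq> {\<lambda>w. 0} \<and> U2 \<noteq> {\<lambda>w. 0} \<and> U1 \<inter> U2 = {\<lambda>w. 0}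
          \<and> (\<forall>u\<in>U. \<exists>u1\<in>U1. \<exists>u2\<in>U2. u = (\<lambda>w. u1 w + u2 w)))"

definition hiso :: "(nat \<Rightarrow> nat \<Rightarrow> nat \<Rightarrow> nat \<Rightarrow> 'k::field) \<Rightarrow> nat \<Rightarrow> nat \<Rightarrow> (nat list \<Rightarrow> 'k) set
    \<Rightarrow> (nat \<Rightarrow> nat \<Rightarrow> nat \<Rightarrow> nat \<Rightarrow> 'k) \<Rightarrow> nat \<Rightarrow> (nat list \<Rightarrow> 'k) set \<Rightarrow> bool" where
  "hiso R1 d1 n U R2 d2 W \<longleftrightarrow> (\<exists>\<phi>. bij_betw \<phi> U W
     \<and> (\<forall>u\<in>U. \<forall>v\<in>U. \<phi> (\<lambda>w. u w + v w) = (\<lambda>w. \<phi> u w + \<phi> v w))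
     \<and> (\<forall>c. \<forall>u\<in>U. \<phi> (\<lambda>w. c * u w) = (\<lambda>w. c * \<phi> u w))
     \<and> (\<forall>i. Suc i < n \<longrightarrow> (\<forall>u\<in>U. \<phi> (Rop R1 d1 n i u) = Rop R2 d2 n i (\<phi> u))))"

text \<open>Linear maps V1^(tensor n) -> V2^(tensor n) as matrices M w u (w output word, u input word).\<close>
definition mapply :: "nat \<Rightarrow> nat \<Rightarrow> (nat list \<Rightarrow> nat list \<Rightarrow> 'k::comm_ring_1) \<Rightarrow> (nat list \<Rightarrow> 'k) \<Rightarrow> nat list \<Rightarrow> 'k" where
  "mapply d n M v = (\<lambda>w. \<Sum>u\<in>words d n. M w u * v u)"

definition mcomp :: "nat \<Rightarrow> nat \<Rightarrow> (nat list \<Rightarrow> nat list \<Rightarrow> 'k::comm_ring_1)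
    \<Rightarrow> (nat list \<Rightarrow> nat list \<Rightarrow> 'k) \<Rightarrow> nat list \<Rightarrow> nat list \<Rightarrow> 'k" where
  "mcomp d n M N = (\<lambda>w u. \<Sum>x\<in>words d n. M w x * N x u)"

definition HomH :: "(nat \<Rightarrow> nat \<Rightarrow> nat \<Rightarrow> nat \<Rightarrow> 'k::field) \<Rightarrow> nat
    \<Rightarrow> (nat \<Rightarrow> nat \<Rightarrow> nat \<Rightarrow> nat \<Rightarrow> 'k) \<Rightarrow> nat \<Rightarrow> nat \<Rightarrow> (nat list \<Rightarrow> nat list \<Rightarrow> 'k) set" where
  "HomH R1 d1 R2 d2 n = {M. (\<forall>w u. w \<notin> words d2 n \<or> u \<notin> words d1 n \<longrightarrow> M w u = 0)
     \<and> (\<forall>i. Suc i < n \<longrightarrow> (\<forall>v\<in>tspace d1 n.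
            mapply d1 n M (Rop R1 d1 n i v) = Rop R2 d2 n i (mapply d1 n M v)))}"

definition linfun :: "(nat list \<Rightarrow> nat list \<Rightarrow> 'k::field) set \<Rightarrow> ((nat list \<Rightarrow> nat list \<Rightarrow> 'k) \<Rightarrow> 'k) \<Rightarrow> bool" where
  "linfun S \<psi> \<longleftrightarrow> (\<forall>x\<in>S. \<forall>y\<in>S. \<psi> (\<lambda>w u. x w u + y w u) = \<psi> x + \<psi> y)
     \<and> (\<forall>c. \<forall>x\<in>S. \<psi> (\<lambda>w u. c * x w u) = c * \<psi> x)"

definition bilin :: "(nat list \<Rightarrow> nat list \<Rightarrow> 'k::field) set \<Rightarrow> (nat list \<Rightarrow> nat list \<Rightarrow> 'k) set
    \<Rightarrow> ((nat list \<Rightarrow> nat list \<Rightarrow> 'k) \<Rightarrow> (nat list \<Rightarrow> nat list \<Rightarrow> 'k) \<Rightarrow> 'k) \<Rightarrow> bool" where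
  "bilin S T \<Phi> \<longleftrightarrow> (\<forall>y\<in>T. linfun S (\<lambda>x. \<Phi> x y)) \<and> (\<forall>x\<in>S. linfun T (\<lambda>y. \<Phi> x y))"

text \<open>Degree n part of Delta_{R',R,R''}: dual of composition,
  psi |-> (f,h) |-> psi(f o h), elements of X^* tensor Y^* being identified with
  bilinear forms on X x Y (X,Y finite dimensional).\<close>
definition delta :: "nat \<Rightarrow> nat \<Rightarrow> ((nat list \<Rightarrow> nat list \<Rightarrow> 'k::field) \<Rightarrow> 'k)
    \<Rightarrow> (nat list \<Rightarrow> nat list \<Rightarrow> 'k) \<Rightarrow> (nat list \<Rightarrow> nat list \<Rightarrow> 'k) \<Rightarrow> 'k" where
  "delta d n \<psi> = (\<lambda>f h. \<psi> (mcomp d n f h))"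

text \<open>Degree n part of the cotensor product A(R',R) cotensor_{A(R)} A(R,R''):
  bilinear forms Phi on X x Y with (rho tensor id)Phi = (id tensor lambda)Phi, i.e.
  Phi(f o g, h) = Phi(f, g o h) for all g in C = End_{H_n}(V^(tensor n)).\<close>
definition cotensor :: "nat \<Rightarrow> nat \<Rightarrow> (nat list \<Rightarrow> nat list \<Rightarrow> 'k::field) set
    \<Rightarrow> (nat list \<Rightarrow> nat list \<Rightarrow> 'k) set \<Rightarrow> (nat list \<Rightarrow> nat list \<Rightarrow> 'k) set
    \<Rightarrow> ((nat list \<Rightarrow> nat list \<Rightarrow> 'k) \<Rightarrow> (nat list \<Rightarrow> nat list \<Rightarrow> 'k) \<Rightarrow> 'k) \<Rightarrow> bool" where
  "cotensor d n X C Y \<Phi> \<longleftrightarrow> bilin X Y \<Phi>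
     \<and> (\<forall>f\<in>X. \<forall>g\<in>C. \<forall>h\<in>Y. \<Phi> (mcomp d n f g) h = \<Phi> f (mcomp d n g h))"

end

theory Submission
  imports Defs "HOL-Library.Function_Algebras" "HOL.Vector_Spaces"
begin

text \<open>Put \<open>X = Hom(V^n, V'^n)\<close>, \<open>C = End(V^n)\<close>, \<open>Y = Hom(V''^n, V^n)\<close> and
  \<open>Z = Hom(V''^n, V'^n)\<close> (all \<open>H_n\<close>-linear). Splitting \<open>V'^n\<close> into indecomposable summands
  (induction on dimension) and transporting each of them into \<open>V^n\<close> by the hypothesis shows that
  the identity of \<open>V'^n\<close> is a finite sum \<open>\<Sum> f\<^sub>i g\<^sub>i\<close> of composites
  \<open>V'^n \<rightarrow> V^n \<rightarrow> V'^n\<close>.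
  Then every \<open>z \<in> Z\<close> equals \<open>\<Sum> f\<^sub>i (g\<^sub>i z)\<close>, so a functional \<open>\<psi>\<close> on \<open>Z\<close> is determined
  by \<open>(f, h) \<mapsto> \<psi> (f h)\<close>, and a balanced bilinear form \<open>\<Phi>\<close> on \<open>X \<times> Y\<close> is the image of
  \<open>\<psi> z = \<Sum> \<Phi> f\<^sub>i (g\<^sub>i z)\<close>, because balancing moves \<open>g\<^sub>i f \<in> C\<close> from one side to the other.
  Only the \<open>H_n\<close>-module structure enters.\<close>

section \<open>Tensor spaces\<close>

lemma finite_words: "finite (words d n)"
proof -
  have "words d n = {xs. set xs \<subseteq> {..<d} \<and> length xs = n}" by (auto simp: words_def)
  thus ?thesis using finite_lists_length_eq[of "{..<d}" n] by simp
qed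

lemma words_0: "words d 0 = {[]}"
  by (auto simp: words_def)

lemma fun_sum_apply: "(\<Sum>x\<in>A. f x) w = (\<Sum>x\<in>A. f x w)"
  by (induction A rule: infinite_finite_induct) auto

lemma fun_sum_list_apply: "sum_list fs x = (\<Sum>f\<leftarrow>fs. f x)"
  by (induction fs) auto

lemma tspace_zero: "0 \<in> tspace d n"
  by (simp add: tspace_def)

lemma tspace_add:
  fixes u v :: "nat list \<Rightarrow> 'k::comm_monoid_add"
  shows "u \<in> tspace d n \<Longrightarrow> v \<in> tspace d n \<Longrightarrow> u + v \<in> tspace d n"
  by (simp add: tspace_def)

lemma tspace_scale:
  fixes v :: "nat list \<Rightarrow> 'k::mult_zero"
  shows "v \<in> tspace d n \<Longrightarrow> (\<lambda>w. c * v w) \<in> tspace d n"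
  by (simp add: tspace_def)

lemma tspace_sum:
  fixes g :: "'a \<Rightarrow> nat list \<Rightarrow> 'k::comm_monoid_add"
  shows "(\<And>x. x \<in> S \<Longrightarrow> g x \<in> tspace d n) \<Longrightarrow> (\<Sum>x\<in>S. g x) \<in> tspace d n"
  by (induction S rule: infinite_finite_induct) (auto simp: tspace_zero tspace_add)

definition unit_vec :: "nat list \<Rightarrow> nat list \<Rightarrow> 'k::zero_neq_one" where
  "unit_vec u = (\<lambda>x. if x = u then 1 else 0)"

lemma unit_vec_tspace: "u \<in> words d n \<Longrightarrow> unit_vec u \<in> tspace d n"
  by (auto simp: unit_vec_def tspace_def)

lemma tspace_expand:
  assumes "v \<in> tspace d n"
  shows "v = (\<Sum>u\<in>words d n. (\<lambda>w. v u * (unit_vec u w :: 'k::field)))"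
proof
  fix w
  show "v w = (\<Sum>u\<in>words d n. (\<lambda>w. v u * unit_vec u w)) w"
  proof (cases "w \<in> words d n")
    case True
    then show ?thesis
      by (simp add: fun_sum_apply unit_vec_def finite_words if_distrib[of "\<lambda>x. _ * x"] cong: if_cong)
  next
    case False
    then show ?thesis
      using assms by (auto simp add: fun_sum_apply unit_vec_def tspace_def intro!: sum.neutral)
  qed
qed

interpretation fun_vs: vector_space "(\<lambda>c v w. c * v w) :: 'k::field \<Rightarrow> (nat list \<Rightarrow> 'k) \<Rightarrow> nat list \<Rightarrow> 'k"
  by unfold_locales (auto simp: plus_fun_def algebra_simps)

lemma tspace_subset_span: "tspace d n \<subseteq> fun_vs.span (unit_vec ` words d n :: (nat list \<Rightarrow> 'k::field) set)"
proof
  fix v :: "nat list \<Rightarrow> 'k" assume "v \<in> tspace d n"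
  hence "v = (\<Sum>u\<in>words d n. (\<lambda>w. v u * unit_vec u w))" by (rule tspace_expand)
  also have "\<dots> \<in> fun_vs.span (unit_vec ` words d n)"
    by (intro fun_vs.span_sum fun_vs.span_scale fun_vs.span_base) auto
  finally show "v \<in> fun_vs.span (unit_vec ` words d n)" .
qed

text \<open>The ambient function space is not finite dimensional, so \<open>dim_psubset\<close> of
  \<open>finite_dimensional_vector_space\<close> is unavailable; finiteness comes from \<open>U \<subseteq> tspace d n\<close>.\<close>

lemma subspace_tspace_dim_less:
  fixes U1 U :: "(nat list \<Rightarrow> 'k::field) set"
  assumes "fun_vs.subspace U1" "fun_vs.subspace U" "U1 \<subset> U" "U \<subseteq> tspace d n"
  shows "fun_vs.dim U1 < fun_vs.dim U"
proof -
  have fin_basis: "finite (unit_vec ` words d n :: (nat list \<Rightarrow> 'k) set)"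
    by (simp add: finite_words)
  obtain B1 where B1: "B1 \<subseteq> U1" "fun_vs.independent B1" "U1 \<subseteq> fun_vs.span B1" "card B1 = fun_vs.dim U1"
    using fun_vs.basis_exists by blast
  obtain B where B: "B \<subseteq> U" "fun_vs.independent B" "U \<subseteq> fun_vs.span B" "card B = fun_vs.dim U"
    using fun_vs.basis_exists by blast
  have "B \<subseteq> fun_vs.span (unit_vec ` words d n)"
    using B(1) assms(4) tspace_subset_span by blast
  hence "finite B"
    using fun_vs.independent_span_bound[OF fin_basis B(2)] by simp
  obtain u where u: "u \<in> U" "u \<notin> U1" using assms(3) by blast
  have "fun_vs.span B1 \<subseteq> U1" using B1(1) assms(1) by (simp add: fun_vs.span_minimal)
  hence indep: "fun_vs.independent (insert u B1)" using u B1(2) fun_vs.independent_insertI by blast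
  have "insert u B1 \<subseteq> fun_vs.span B" using B(3) u(1) B1(1) assms(3) by blast
  from fun_vs.independent_span_bound[OF \<open>finite B\<close> indep this]
  have "finite (insert u B1) \<and> card (insert u B1) \<le> card B" .
  moreover have "u \<notin> B1" using u B1(1) by blast
  ultimately show ?thesis using B1(4) B(4) by auto
qed

section \<open>Submodules, complements and projections\<close>

lemma Rop_tspace: "Rop R d n i v \<in> tspace d n"
  by (simp add: Rop_def tspace_def)

lemma Rop_add: "Rop R d n i (u + v) = Rop R d n i u + Rop R d n i v"
  by (rule ext) (simp add: Rop_def distrib_left sum.distrib)

lemma Rop_zero: "Rop R d n i 0 = 0"
  by (rule ext) (simp add: Rop_def)

lemma hsubmodD:
  assumes "hsubmod R d n U"
  shows "U \<subseteq> tspace d n" "0 \<in> U" "\<And>u v. u \<in> U \<Longrightarrow> v \<in> U \<Longrightarrow> u + v \<in> U"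
    "\<And>c u. u \<in> U \<Longrightarrow> (\<lambda>w. c * u w) \<in> U"
    "\<And>i u. Suc i < n \<Longrightarrow> u \<in> U \<Longrightarrow> Rop R d n i u \<in> U"
  using assms unfolding hsubmod_def zero_fun_def plus_fun_def by blast+

lemma hsubmodI:
  assumes "U \<subseteq> tspace d n" "0 \<in> U" "\<And>u v. u \<in> U \<Longrightarrow> v \<in> U \<Longrightarrow> u + v \<in> U"
    "\<And>c u. u \<in> U \<Longrightarrow> (\<lambda>w. c * u w) \<in> U"
    "\<And>i u. Suc i < n \<Longrightarrow> u \<in> U \<Longrightarrow> Rop R d n i u \<in> U"
  shows "hsubmod R d n U"
  using assms unfolding hsubmod_def zero_fun_def plus_fun_def by blast

lemma hsubmod_diff:
  assumes "hsubmod R d n U" "u \<in> U" "v \<in> U"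
  shows "u - v \<in> U"
proof -
  have "(\<lambda>w. (-1) * v w) = - v" by (rule ext) simp
  hence "- v \<in> U" using hsubmodD(4)[OF assms(1) assms(3), of "-1"] by simp
  from hsubmodD(3)[OF assms(1) assms(2) this] show ?thesis by (simp only: diff_conv_add_uminus)
qed

lemma hsubmod_subspace: "hsubmod R d n U \<Longrightarrow> fun_vs.subspace U"
  by (simp add: fun_vs.subspace_def hsubmodD)

lemma hsubmod_zero: "hsubmod R d n {0}"
  by (rule hsubmodI) (auto simp: tspace_zero Rop_zero)

lemma hsubmod_tspace: "hsubmod R d n (tspace d n)"
  by (rule hsubmodI) (auto simp: tspace_zero tspace_add tspace_scale Rop_tspace)

definition hcomplement :: "(nat \<Rightarrow> nat \<Rightarrow> nat \<Rightarrow> nat \<Rightarrow> 'k::field) \<Rightarrow> nat \<Rightarrow> nat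
    \<Rightarrow> (nat list \<Rightarrow> 'k) set \<Rightarrow> (nat list \<Rightarrow> 'k) set \<Rightarrow> bool" where
  "hcomplement R d n U U' \<longleftrightarrow> hsubmod R d n U \<and> hsubmod R d n U' \<and> U \<inter> U' = {0}
     \<and> (\<forall>v\<in>tspace d n. \<exists>u\<in>U. \<exists>u'\<in>U'. v = u + u')"

lemma hsummand_iff_hcomplement: "hsummand R d n U \<longleftrightarrow> (\<exists>U'. hcomplement R d n U U')"
  unfolding hsummand_def hcomplement_def zero_fun_def plus_fun_def by blast

lemma hcomplement_tspace_zero: "hcomplement R d n (tspace d n) {0}"
  unfolding hcomplement_def using hsubmod_tspace hsubmod_zero tspace_zero by fastforce

lemma not_hindecE:
  assumes "\<not> hindec R d n U"
  obtains "U = {0}"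
  | U1 U2 where "hsubmod R d n U1" "hsubmod R d n U2" "U1 \<subseteq> U" "U2 \<subseteq> U"
      "U1 \<noteq> {0}" "U2 \<noteq> {0}" "U1 \<inter> U2 = {0}" "\<forall>u\<in>U. \<exists>u1\<in>U1. \<exists>u2\<in>U2. u = u1 + u2"
  using assms unfolding hindec_def zero_fun_def plus_fun_def by blast

definition hhom_on :: "(nat \<Rightarrow> nat \<Rightarrow> nat \<Rightarrow> nat \<Rightarrow> 'k::field) \<Rightarrow> nat \<Rightarrow> nat \<Rightarrow> (nat list \<Rightarrow> 'k) set
    \<Rightarrow> (nat \<Rightarrow> nat \<Rightarrow> nat \<Rightarrow> nat \<Rightarrow> 'k) \<Rightarrow> nat \<Rightarrow> ((nat list \<Rightarrow> 'k) \<Rightarrow> nat list \<Rightarrow> 'k) \<Rightarrow> bool" where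
  "hhom_on R1 d1 n U R2 d2 f \<longleftrightarrow> (\<forall>u\<in>U. \<forall>v\<in>U. f (u + v) = f u + f v)
     \<and> (\<forall>c. \<forall>u\<in>U. f (\<lambda>w. c * u w) = (\<lambda>w. c * f u w))
     \<and> (\<forall>i. Suc i < n \<longrightarrow> (\<forall>u\<in>U. f (Rop R1 d1 n i u) = Rop R2 d2 n i (f u)))"

lemma hhom_onD:
  assumes "hhom_on R1 d1 n U R2 d2 f"
  shows "\<And>u v. u \<in> U \<Longrightarrow> v \<in> U \<Longrightarrow> f (u + v) = f u + f v"
    "\<And>c u. u \<in> U \<Longrightarrow> f (\<lambda>w. c * u w) = (\<lambda>w. c * f u w)"
    "\<And>i u. Suc i < n \<Longrightarrow> u \<in> U \<Longrightarrow> f (Rop R1 d1 n i u) = Rop R2 d2 n i (f u)"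
  using assms unfolding hhom_on_def by blast+

lemma hiso_iff: "hiso R1 d1 n U R2 d2 W \<longleftrightarrow> (\<exists>\<phi>. bij_betw \<phi> U W \<and> hhom_on R1 d1 n U R2 d2 \<phi>)"
  unfolding hiso_def hhom_on_def plus_fun_def by (rule refl)

lemma hhom_on_comp:
  assumes "hhom_on R1 d1 n U R2 d2 f" "f ` U \<subseteq> V" "hhom_on R2 d2 n V R3 d3 g"
  shows "hhom_on R1 d1 n U R3 d3 (g \<circ> f)"
  using assms unfolding hhom_on_def by (simp add: image_subset_iff)

lemma hhom_on_inv_into:
  assumes U: "hsubmod R1 d1 n U" and bij: "bij_betw \<phi> U W" and hom: "hhom_on R1 d1 n U R2 d2 \<phi>"
  shows "hhom_on R2 d2 n W R1 d1 (inv_into U \<phi>)"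
proof -
  let ?g = "inv_into U \<phi>"
  have g: "?g x \<in> U" "\<phi> (?g x) = x" if "x \<in> W" for x
    using that bij by (auto simp: bij_betw_def inv_into_into f_inv_into_f)
  have g_inverse: "?g (\<phi> u) = u" if "u \<in> U" for u
    using that bij by (simp add: bij_betw_def inv_into_f_f)
  note UU = hsubmodD[OF U] and \<phi> = hhom_onD[OF hom]
  show ?thesis
    unfolding hhom_on_def
  proof (intro conjI ballI allI impI)
    fix x y assume "x \<in> W" "y \<in> W"
    hence "?g (x + y) = ?g (\<phi> (?g x + ?g y))" using \<phi>(1) g by simp
    thus "?g (x + y) = ?g x + ?g y" using g_inverse UU(3) g \<open>x \<in> W\<close> \<open>y \<in> W\<close> by simp
  next
    fix c x assume "x \<in> W"
    hence "?g (\<lambda>w. c * x w) = ?g (\<phi> (\<lambda>w. c * ?g x w))" using \<phi>(2) g by simp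
    thus "?g (\<lambda>w. c * x w) = (\<lambda>w. c * ?g x w)" using g_inverse UU(4) g \<open>x \<in> W\<close> by simp
  next
    fix i x assume "Suc i < n" "x \<in> W"
    hence "?g (Rop R2 d2 n i x) = ?g (\<phi> (Rop R1 d1 n i (?g x)))" using \<phi>(3) g by simp
    thus "?g (Rop R2 d2 n i x) = Rop R1 d1 n i (?g x)"
      using g_inverse UU(5) g \<open>Suc i < n\<close> \<open>x \<in> W\<close> by simp
  qed
qed

definition hlinear :: "(nat \<Rightarrow> nat \<Rightarrow> nat \<Rightarrow> nat \<Rightarrow> 'k::field) \<Rightarrow> nat \<Rightarrow> (nat \<Rightarrow> nat \<Rightarrow> nat \<Rightarrow> nat \<Rightarrow> 'k)
    \<Rightarrow> nat \<Rightarrow> nat \<Rightarrow> ((nat list \<Rightarrow> 'k) \<Rightarrow> nat list \<Rightarrow> 'k) \<Rightarrow> bool" where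
  "hlinear R1 d1 R2 d2 n f \<longleftrightarrow> f ` tspace d1 n \<subseteq> tspace d2 n \<and> hhom_on R1 d1 n (tspace d1 n) R2 d2 f"

lemma hlinear_tspace: "hlinear R1 d1 R2 d2 n f \<Longrightarrow> v \<in> tspace d1 n \<Longrightarrow> f v \<in> tspace d2 n"
  unfolding hlinear_def by blast

lemma hlinear_hhom_on: "hlinear R1 d1 R2 d2 n f \<Longrightarrow> hhom_on R1 d1 n (tspace d1 n) R2 d2 f"
  unfolding hlinear_def by blast

lemma hlinear_zero: "hlinear R1 d1 R2 d2 n f \<Longrightarrow> f 0 = 0"
  using hhom_onD(2)[OF hlinear_hhom_on tspace_zero, of R1 d1 R2 d2 n f 0]
  by (simp add: zero_fun_def)

lemma hlinear_sum:
  assumes f: "hlinear R1 d1 R2 d2 n f"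
  shows "(\<And>x. x \<in> S \<Longrightarrow> g x \<in> tspace d1 n) \<Longrightarrow> f (\<Sum>x\<in>S. g x) = (\<Sum>x\<in>S. f (g x))"
proof (induction S rule: infinite_finite_induct)
  case (insert x F)
  have "f (\<Sum>x\<in>insert x F. g x) = f (g x + (\<Sum>x\<in>F. g x))"
    using sum.insert[OF insert(1,2), of g] by (rule arg_cong)
  also have "\<dots> = f (g x) + f (\<Sum>x\<in>F. g x)"
    by (rule hhom_onD(1)[OF hlinear_hhom_on[OF f]]) (use insert in \<open>auto intro!: tspace_sum\<close>)
  also have "\<dots> = (\<Sum>x\<in>insert x F. f (g x))"
    using insert by simp
  finally show ?case .
qed (simp_all add: hlinear_zero[OF f])

text \<open>Only meaningful when \<open>U, U'\<close> are complementary; otherwise \<open>SOME\<close> picks an arbitrary value.\<close>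

definition proj_along :: "(nat list \<Rightarrow> 'k::field) set \<Rightarrow> (nat list \<Rightarrow> 'k) set \<Rightarrow> (nat list \<Rightarrow> 'k) \<Rightarrow> nat list \<Rightarrow> 'k" where
  "proj_along U U' v = (SOME u. u \<in> U \<and> (\<exists>u'\<in>U'. v = u + u'))"

lemma proj_along_eq:
  assumes "hcomplement R d n U U'" "u \<in> U" "u' \<in> U'"
  shows "proj_along U U' (u + u') = u"
proof -
  have U: "hsubmod R d n U" "hsubmod R d n U'" "U \<inter> U' = {0}"
    using assms(1) unfolding hcomplement_def by blast+
  have "\<exists>x. x \<in> U \<and> (\<exists>x'\<in>U'. u + u' = x + x')" using assms by blast
  from someI_ex[OF this] obtain x x' where x: "x \<in> U" "x' \<in> U'" "u + u' = x + x'"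
    and px: "proj_along U U' (u + u') = x"
    unfolding proj_along_def by blast
  have "x - u = u' - x'" using x(3) by (simp add: algebra_simps)
  moreover have "x - u \<in> U" "u' - x' \<in> U'"
    using hsubmod_diff U x assms by blast+
  ultimately have "x - u = 0" using U(3) by (metis IntI singletonD)
  thus ?thesis using px by simp
qed

lemma hcomplement_decomp:
  assumes "hcomplement R d n U U'" "v \<in> tspace d n"
  obtains u u' where "u \<in> U" "u' \<in> U'" "v = u + u'"
  using assms unfolding hcomplement_def by blast

lemma proj_along_in:
  assumes "hcomplement R d n U U'" "v \<in> tspace d n"
  shows "proj_along U U' v \<in> U"
  using proj_along_eq[OF assms(1)] hcomplement_decomp[OF assms] by metis

lemma hlinear_proj_along:
  fixes R :: "nat \<Rightarrow> nat \<Rightarrow> nat \<Rightarrow> nat \<Rightarrow> 'k::field"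
  assumes UU': "hcomplement R d n U U'"
  shows "hlinear R d R d n (proj_along U U')"
proof -
  have U: "hsubmod R d n U" "hsubmod R d n U'" "U \<subseteq> tspace d n"
    using UU' hsubmodD(1) unfolding hcomplement_def by blast+
  note A = hsubmodD[OF U(1)] and B = hsubmodD[OF U(2)]
  note decomp = hcomplement_decomp[OF UU'] and proj = proj_along_eq[OF UU']
  have "hhom_on R d n (tspace d n) R d (proj_along U U')"
    unfolding hhom_on_def
  proof (intro conjI ballI allI impI)
    fix u v :: "nat list \<Rightarrow> 'k" assume u: "u \<in> tspace d n" and v: "v \<in> tspace d n"
    obtain a a' where a: "a \<in> U" "a' \<in> U'" "u = a + a'" by (rule decomp[OF u])
    obtain b b' where b: "b \<in> U" "b' \<in> U'" "v = b + b'" by (rule decomp[OF v])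
    have "u + v = (a + b) + (a' + b')" using a b by (simp add: algebra_simps)
    hence "proj_along U U' (u + v) = a + b"
      using proj[OF A(3)[OF a(1) b(1)] B(3)[OF a(2) b(2)]] by simp
    thus "proj_along U U' (u + v) = proj_along U U' u + proj_along U U' v"
      using a b proj by simp
  next
    fix c and v :: "nat list \<Rightarrow> 'k" assume v: "v \<in> tspace d n"
    obtain a a' where a: "a \<in> U" "a' \<in> U'" "v = a + a'" by (rule decomp[OF v])
    hence "(\<lambda>w. c * v w) = (\<lambda>w. c * a w) + (\<lambda>w. c * a' w)"
      by (simp add: plus_fun_def algebra_simps)
    thus "proj_along U U' (\<lambda>w. c * v w) = (\<lambda>w. c * proj_along U U' v w)"
      using a proj A(4) B(4) by simp
  next
    fix i and v :: "nat list \<Rightarrow> 'k" assume i: "Suc i < n" and v: "v \<in> tspace d n"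
    obtain a a' where a: "a \<in> U" "a' \<in> U'" "v = a + a'" by (rule decomp[OF v])
    thus "proj_along U U' (Rop R d n i v) = Rop R d n i (proj_along U U' v)"
      using proj A(5) B(5) i by (simp add: Rop_add)
  qed
  thus ?thesis
    unfolding hlinear_def using proj_along_in[OF UU'] U(3) by blast
qed

section \<open>Factoring projections through \<open>V^n\<close>\<close>

lemma proj_along_id: "hcomplement R d n U U' \<Longrightarrow> u \<in> U \<Longrightarrow> proj_along U U' u = u"
  using proj_along_eq[of R d n U U' u 0] hsubmodD(2) unfolding hcomplement_def by force

lemma hlinear_comp_proj_along:
  assumes UU': "hcomplement R1 d1 n U U'" and W: "hsubmod R2 d2 n W"
    and \<phi>: "\<phi> ` U \<subseteq> W" "hhom_on R1 d1 n U R2 d2 \<phi>"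
  shows "hlinear R1 d1 R2 d2 n (\<phi> \<circ> proj_along U U')"
proof -
  have "proj_along U U' ` tspace d1 n \<subseteq> U" using proj_along_in[OF UU'] by blast
  moreover have "hhom_on R1 d1 n (tspace d1 n) R1 d1 (proj_along U U')"
    by (rule hlinear_hhom_on[OF hlinear_proj_along[OF UU']])
  ultimately show ?thesis
    unfolding hlinear_def using hhom_on_comp[OF _ _ \<phi>(2)] \<phi>(1) hsubmodD(1)[OF W] by fastforce
qed

definition proj_factors_through :: "(nat \<Rightarrow> nat \<Rightarrow> nat \<Rightarrow> nat \<Rightarrow> 'k::field) \<Rightarrow> nat
    \<Rightarrow> (nat \<Rightarrow> nat \<Rightarrow> nat \<Rightarrow> nat \<Rightarrow> 'k) \<Rightarrow> nat \<Rightarrow> nat \<Rightarrow> (nat list \<Rightarrow> 'k) set \<Rightarrow> (nat list \<Rightarrow> 'k) set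
    \<Rightarrow> bool" where
  "proj_factors_through R d R' d' n U U' \<longleftrightarrow>
     (\<exists>ps. (\<forall>p\<in>set ps. hlinear R d R' d' n (fst p) \<and> hlinear R' d' R d n (snd p))
        \<and> (\<forall>v\<in>tspace d' n. proj_along U U' v = (\<Sum>p\<leftarrow>ps. fst p (snd p v))))"

lemma proj_factors_through_hiso:
  assumes U: "hcomplement R' d' n U U'" and W: "hcomplement R d n W W'" and iso: "hiso R' d' n U R d W"
  shows "proj_factors_through R d R' d' n U U'"
proof -
  obtain \<phi> where bij: "bij_betw \<phi> U W" and hom: "hhom_on R' d' n U R d \<phi>"
    using iso by (auto simp: hiso_iff)
  have subm: "hsubmod R' d' n U" "hsubmod R d n W"
    using U W unfolding hcomplement_def by blast+
  have \<beta>: "hlinear R' d' R d n (\<phi> \<circ> proj_along U U')"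
    using hlinear_comp_proj_along[OF U subm(2) _ hom] bij by (simp add: bij_betw_def)
  have \<alpha>: "hlinear R d R' d' n (inv_into U \<phi> \<circ> proj_along W W')"
    using hlinear_comp_proj_along[OF W subm(1) _ hhom_on_inv_into[OF subm(1) bij hom]] bij
    by (simp add: bij_betw_def image_subset_iff inv_into_into)
  have "proj_along U U' v = (inv_into U \<phi> \<circ> proj_along W W') ((\<phi> \<circ> proj_along U U') v)"
    if "v \<in> tspace d' n" for v
  proof -
    have "proj_along U U' v \<in> U" by (rule proj_along_in[OF U that])
    thus ?thesis
      using proj_along_id[OF W] bij by (auto simp: bij_betw_def inv_into_f_f)
  qed
  with \<alpha> \<beta> show ?thesis
    unfolding proj_factors_through_def
    by (intro exI[of _ "[(inv_into U \<phi> \<circ> proj_along W W', \<phi> \<circ> proj_along U U')]"]) simp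
qed

lemma hsubmod_sum:
  fixes R :: "nat \<Rightarrow> nat \<Rightarrow> nat \<Rightarrow> nat \<Rightarrow> 'k::field"
  assumes A: "hsubmod R d n A" and B: "hsubmod R d n B"
  shows "hsubmod R d n {x + y | x y. x \<in> A \<and> y \<in> B}"
proof -
  let ?C = "{x + y | x y. x \<in> A \<and> y \<in> B}"
  note a = hsubmodD[OF A] and b = hsubmodD[OF B]
  show ?thesis
  proof (rule hsubmodI)
    show "?C \<subseteq> tspace d n" using a(1) b(1) tspace_add by blast
    have "(0::nat list \<Rightarrow> 'k) = 0 + 0" by simp
    thus "0 \<in> ?C" using a(2) b(2) by blast
  next
    fix x y assume "x \<in> ?C" "y \<in> ?C"
    then obtain x1 x2 y1 y2 where xy: "x1 \<in> A" "x2 \<in> B" "x = x1 + x2" "y1 \<in> A" "y2 \<in> B" "y = y1 + y2"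
      by blast
    have "x + y = (x1 + y1) + (x2 + y2)" using xy by (simp add: algebra_simps)
    moreover have "x1 + y1 \<in> A" "x2 + y2 \<in> B" using xy a(3) b(3) by auto
    ultimately show "x + y \<in> ?C" by blast
  next
    fix c x assume "x \<in> ?C"
    then obtain x1 x2 where xy: "x1 \<in> A" "x2 \<in> B" "x = x1 + x2" by blast
    have "(\<lambda>w. c * x w) = (\<lambda>w. c * x1 w) + (\<lambda>w. c * x2 w)"
      using xy by (simp add: plus_fun_def algebra_simps)
    moreover have "(\<lambda>w. c * x1 w) \<in> A" "(\<lambda>w. c * x2 w) \<in> B" using xy a(4) b(4) by auto
    ultimately show "(\<lambda>w. c * x w) \<in> ?C" by blast
  next
    fix i x assume i: "Suc i < n" and "x \<in> ?C"
    then obtain x1 x2 where xy: "x1 \<in> A" "x2 \<in> B" "x = x1 + x2" by blast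
    have "Rop R d n i x = Rop R d n i x1 + Rop R d n i x2" using xy by (simp add: Rop_add)
    moreover have "Rop R d n i x1 \<in> A" "Rop R d n i x2 \<in> B" using xy a(5) b(5) i by auto
    ultimately show "Rop R d n i x \<in> ?C" by blast
  qed
qed

lemma hcomplement_refine:
  fixes R :: "nat \<Rightarrow> nat \<Rightarrow> nat \<Rightarrow> nat \<Rightarrow> 'k::field"
  assumes UU': "hcomplement R d n U U'"
    and U12: "hsubmod R d n U1" "hsubmod R d n U2" "U1 \<subseteq> U" "U2 \<subseteq> U" "U1 \<inter> U2 = {0}"
      "\<forall>u\<in>U. \<exists>u1\<in>U1. \<exists>u2\<in>U2. u = u1 + u2"
  shows "hcomplement R d n U1 {x + y | x y. x \<in> U2 \<and> y \<in> U'}"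
proof -
  let ?C = "{x + y | x y. x \<in> U2 \<and> y \<in> U'}"
  have U: "hsubmod R d n U" "hsubmod R d n U'" "U \<inter> U' = {0}"
    using UU' unfolding hcomplement_def by blast+
  have "hsubmod R d n ?C"
    by (rule hsubmod_sum[OF U12(2) U(2)])
  moreover have "U1 \<inter> ?C \<subseteq> {0}"
  proof
    fix z assume "z \<in> U1 \<inter> ?C"
    then obtain x y where z: "z \<in> U1" "x \<in> U2" "y \<in> U'" "z = x + y" by blast
    have "z - x \<in> U" using hsubmod_diff[OF U(1)] z U12(3,4) by blast
    moreover have "z - x = y" using z by simp
    ultimately have "y = 0" using U(3) z(3) by blast
    hence "z \<in> U1 \<inter> U2" using z by simp
    thus "z \<in> {0}" using U12(5) by simp
  qed
  moreover have "0 \<in> U1 \<inter> ?C" using U12(1) \<open>hsubmod R d n ?C\<close> hsubmodD(2) by blast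
  moreover have "\<exists>u\<in>U1. \<exists>c\<in>?C. v = u + c" if v: "v \<in> tspace d n" for v
  proof -
    obtain u u' where "u \<in> U" "u' \<in> U'" "v = u + u'" by (rule hcomplement_decomp[OF UU' v])
    moreover obtain u1 u2 where "u1 \<in> U1" "u2 \<in> U2" "u = u1 + u2" using U12(6) \<open>u \<in> U\<close> by blast
    ultimately show ?thesis by (intro bexI[of _ u1] bexI[of _ "u2 + u'"]) (auto simp: add.assoc)
  qed
  ultimately show ?thesis
    unfolding hcomplement_def using U12(1) by blast
qed

lemma proj_along_refine:
  fixes R :: "nat \<Rightarrow> nat \<Rightarrow> nat \<Rightarrow> nat \<Rightarrow> 'k::field"
  assumes UU': "hcomplement R d n U U'"
    and U12: "hsubmod R d n U1" "hsubmod R d n U2" "U1 \<subseteq> U" "U2 \<subseteq> U" "U1 \<inter> U2 = {0}"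
      "\<forall>u\<in>U. \<exists>u1\<in>U1. \<exists>u2\<in>U2. u = u1 + u2"
    and v: "v \<in> tspace d n"
  shows "proj_along U U' v
    = proj_along U1 {x + y | x y. x \<in> U2 \<and> y \<in> U'} v + proj_along U2 {x + y | x y. x \<in> U1 \<and> y \<in> U'} v"
proof -
  have C1: "hcomplement R d n U1 {x + y | x y. x \<in> U2 \<and> y \<in> U'}"
    by (rule hcomplement_refine[OF UU' U12])
  have "U2 \<inter> U1 = {0}" "\<forall>u\<in>U. \<exists>u2\<in>U2. \<exists>u1\<in>U1. u = u2 + u1"
    using U12(5,6) by (blast, fastforce simp: add.commute)
  hence C2: "hcomplement R d n U2 {x + y | x y. x \<in> U1 \<and> y \<in> U'}"
    by (rule hcomplement_refine[OF UU' U12(2,1,4,3)])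
  obtain u u' where u: "u \<in> U" "u' \<in> U'" "v = u + u'" by (rule hcomplement_decomp[OF UU' v])
  obtain u1 u2 where u12: "u1 \<in> U1" "u2 \<in> U2" "u = u1 + u2" using U12(6) u(1) by blast
  have "u2 + u' \<in> {x + y | x y. x \<in> U2 \<and> y \<in> U'}" "u1 + u' \<in> {x + y | x y. x \<in> U1 \<and> y \<in> U'}"
    using u(2) u12(1,2) by blast+
  from proj_along_eq[OF C1 u12(1) this(1)] proj_along_eq[OF C2 u12(2) this(2)]
  have "proj_along U1 {x + y | x y. x \<in> U2 \<and> y \<in> U'} v = u1"
    "proj_along U2 {x + y | x y. x \<in> U1 \<and> y \<in> U'} v = u2"
    using u(3) u12(3) by (simp_all add: algebra_simps)
  moreover have "proj_along U U' v = u1 + u2"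
    using proj_along_eq[OF UU' u(1,2)] u(3) u12(3) by simp
  ultimately show ?thesis by simp
qed

lemma proj_factors_through_zero:
  assumes "hcomplement R' d' n {0} U'"
  shows "proj_factors_through R d R' d' n {0} U'"
  using proj_along_in[OF assms] unfolding proj_factors_through_def by (intro exI[of _ "[]"]) simp

lemma proj_factors_through_refine:
  fixes R' :: "nat \<Rightarrow> nat \<Rightarrow> nat \<Rightarrow> nat \<Rightarrow> 'k::field"
  assumes UU': "hcomplement R' d' n U U'"
    and U12: "hsubmod R' d' n U1" "hsubmod R' d' n U2" "U1 \<subseteq> U" "U2 \<subseteq> U" "U1 \<inter> U2 = {0}"
      "\<forall>u\<in>U. \<exists>u1\<in>U1. \<exists>u2\<in>U2. u = u1 + u2"
    and "proj_factors_through R d R' d' n U1 {x + y | x y. x \<in> U2 \<and> y \<in> U'}"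
      "proj_factors_through R d R' d' n U2 {x + y | x y. x \<in> U1 \<and> y \<in> U'}"
  shows "proj_factors_through R d R' d' n U U'"
proof -
  obtain ps1 where
    "\<forall>p\<in>set ps1. hlinear R d R' d' n (fst p) \<and> hlinear R' d' R d n (snd p)"
    "\<forall>v\<in>tspace d' n. proj_along U1 {x + y | x y. x \<in> U2 \<and> y \<in> U'} v = (\<Sum>p\<leftarrow>ps1. fst p (snd p v))"
    using assms(8) unfolding proj_factors_through_def by blast
  moreover obtain ps2 where
    "\<forall>p\<in>set ps2. hlinear R d R' d' n (fst p) \<and> hlinear R' d' R d n (snd p)"
    "\<forall>v\<in>tspace d' n. proj_along U2 {x + y | x y. x \<in> U1 \<and> y \<in> U'} v = (\<Sum>p\<leftarrow>ps2. fst p (snd p v))"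
    using assms(9) unfolding proj_factors_through_def by blast
  ultimately show ?thesis
    unfolding proj_factors_through_def using proj_along_refine[OF UU' U12]
    by (intro exI[of _ "ps1 @ ps2"]) auto
qed

lemma summand_proj_factors_through:
  fixes R R' :: "nat \<Rightarrow> nat \<Rightarrow> nat \<Rightarrow> nat \<Rightarrow> 'k::field"
  assumes transfer: "\<forall>U. hsummand R' d' n U \<and> hindec R' d' n U \<longrightarrow> (\<exists>W. hsummand R d n W \<and> hiso R' d' n U R d W)"
    and "hcomplement R' d' n U U'"
  shows "proj_factors_through R d R' d' n U U'"
  using assms(2)
proof (induction "fun_vs.dim U" arbitrary: U U' rule: less_induct)
  case less
  show ?case
  proof (cases "hindec R' d' n U")
    case True
    then obtain W W' where "hcomplement R d n W W'" "hiso R' d' n U R d W"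
      using transfer less.prems by (meson hsummand_iff_hcomplement)
    then show ?thesis by (rule proj_factors_through_hiso[OF less.prems])
  next
    case False
    then show ?thesis
    proof (cases rule: not_hindecE)
      case 1
      then show ?thesis using less.prems proj_factors_through_zero by simp
    next
      case (2 U1 U2)
      have U: "hsubmod R' d' n U" "U \<subseteq> tspace d' n"
        using less.prems hsubmodD(1) unfolding hcomplement_def by blast+
      have "U1 \<subset> U" "U2 \<subset> U"
        using 2 hsubmodD(2) by blast+
      hence dim: "fun_vs.dim U1 < fun_vs.dim U" "fun_vs.dim U2 < fun_vs.dim U"
        using subspace_tspace_dim_less hsubmod_subspace 2(1,2) U by blast+
      have "U2 \<inter> U1 = {0}" "\<forall>u\<in>U. \<exists>u2\<in>U2. \<exists>u1\<in>U1. u = u2 + u1"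
        using 2(7,8) by (blast, fastforce simp: add.commute)
      note C1 = hcomplement_refine[OF less.prems 2(1-4,7,8)]
        and C2 = hcomplement_refine[OF less.prems 2(2,1,4,3) this]
      show ?thesis
        by (rule proj_factors_through_refine[OF less.prems 2(1-4,7,8)])
          (use less.hyps[OF dim(1) C1] less.hyps[OF dim(2) C2] in simp_all)
    qed
  qed
qed

section \<open>Matrices of \<open>H_n\<close>-maps\<close>

lemma mcomp_assoc: "mcomp d1 n (mcomp d2 n A B) C = mcomp d2 n A (mcomp d1 n B C)"
  unfolding mcomp_def
  by (intro ext) (simp add: sum_distrib_left sum_distrib_right mult.assoc sum.swap[of _ "words d1 n"])

lemma mapply_mcomp: "mapply d0 n (mcomp d1 n f g) v = mapply d1 n f (mapply d0 n g v)"
  unfolding mcomp_def mapply_def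
  by (intro ext) (simp add: sum_distrib_left sum_distrib_right mult.assoc sum.swap[of _ "words d0 n"])

lemma mapply_add: "mapply d n (x + y) v = mapply d n x v + mapply d n y v"
  by (rule ext) (simp add: mapply_def distrib_right sum.distrib)

lemma mapply_zero: "mapply d n 0 v = 0"
  by (rule ext) (simp add: mapply_def)

lemma mcomp_add_left: "mcomp d n (x + y) h = mcomp d n x h + mcomp d n y h"
  by (intro ext) (simp add: mcomp_def distrib_right sum.distrib)

lemma mcomp_add_right: "mcomp d n f (x + y) = mcomp d n f x + mcomp d n f y"
  by (intro ext) (simp add: mcomp_def distrib_left sum.distrib)

lemma mcomp_scale_left: "mcomp d n (\<lambda>w u. c * x w u) h = (\<lambda>w u. c * mcomp d n x h w u)"
  by (intro ext) (simp add: mcomp_def sum_distrib_left mult.assoc)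

lemma mcomp_scale_right: "mcomp d n f (\<lambda>w u. c * x w u) = (\<lambda>w u. c * mcomp d n f x w u)"
  by (intro ext) (simp add: mcomp_def sum_distrib_left mult.left_commute)

lemma mcomp_zero_left: "mcomp d n 0 h = 0"
  by (intro ext) (simp add: mcomp_def)

lemma mcomp_sum_list_left: "mcomp d n (sum_list xs) h = (\<Sum>x\<leftarrow>xs. mcomp d n x h)"
  by (induction xs) (simp_all only: list.map sum_list.Nil sum_list.Cons mcomp_zero_left mcomp_add_left)

definition id_matrix :: "nat \<Rightarrow> nat \<Rightarrow> nat list \<Rightarrow> nat list \<Rightarrow> 'k::field" where
  "id_matrix d n = (\<lambda>w u. if w = u \<and> u \<in> words d n then 1 else 0)"

lemma mcomp_id_matrix_left:
  assumes "\<And>w u. w \<notin> words d n \<Longrightarrow> f w u = 0"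
  shows "mcomp d n (id_matrix d n) f = f"
proof (intro ext)
  fix w u
  show "mcomp d n (id_matrix d n) f w u = f w u"
  proof (cases "w \<in> words d n")
    case True
    then show ?thesis
      by (simp add: mcomp_def id_matrix_def finite_words if_distrib[of "\<lambda>x. x * _"] cong: if_cong)
  next
    case False
    then show ?thesis using assms by (auto simp: mcomp_def id_matrix_def intro!: sum.neutral)
  qed
qed

lemma HomH_vanishes: "f \<in> HomH R1 d1 R2 d2 n \<Longrightarrow> w \<notin> words d2 n \<or> u \<notin> words d1 n \<Longrightarrow> f w u = 0"
  by (simp add: HomH_def)

lemma HomH_commutes: "f \<in> HomH R1 d1 R2 d2 n \<Longrightarrow> Suc i < n \<Longrightarrow> v \<in> tspace d1 n \<Longrightarrow>
    mapply d1 n f (Rop R1 d1 n i v) = Rop R2 d2 n i (mapply d1 n f v)"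
  by (simp add: HomH_def)

lemma HomH_mapply_tspace: "f \<in> HomH R1 d1 R2 d2 n \<Longrightarrow> mapply d1 n f v \<in> tspace d2 n"
  by (simp add: HomH_def mapply_def tspace_def)

lemma HomH_le_1: "n \<le> 1 \<Longrightarrow> M \<in> HomH R1 d1 R2 d2 n \<longleftrightarrow> (\<forall>w u. w \<notin> words d2 n \<or> u \<notin> words d1 n \<longrightarrow> M w u = 0)"
  by (simp add: HomH_def)

lemma mcomp_HomH:
  fixes R0 :: "nat \<Rightarrow> nat \<Rightarrow> nat \<Rightarrow> nat \<Rightarrow> 'k::field"
  assumes f: "f \<in> HomH R1 d1 R2 d2 n" and g: "g \<in> HomH R0 d0 R1 d1 n"
  shows "mcomp d1 n f g \<in> HomH R0 d0 R2 d2 n"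
  unfolding HomH_def
proof (intro CollectI conjI allI impI ballI)
  fix w u assume "w \<notin> words d2 n \<or> u \<notin> words d0 n"
  thus "mcomp d1 n f g w u = 0" using HomH_vanishes[OF f] HomH_vanishes[OF g] by (auto simp: mcomp_def)
next
  fix i and v :: "nat list \<Rightarrow> 'k" assume i: "Suc i < n" and v: "v \<in> tspace d0 n"
  show "mapply d0 n (mcomp d1 n f g) (Rop R0 d0 n i v) = Rop R2 d2 n i (mapply d0 n (mcomp d1 n f g) v)"
    unfolding mapply_mcomp using HomH_commutes[OF g i v] HomH_commutes[OF f i HomH_mapply_tspace[OF g]]
    by simp
qed

lemma HomH_add: "x \<in> HomH R1 d1 R2 d2 n \<Longrightarrow> y \<in> HomH R1 d1 R2 d2 n \<Longrightarrow> x + y \<in> HomH R1 d1 R2 d2 n"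
  unfolding HomH_def by (simp add: mapply_add Rop_add)

lemma HomH_zero: "0 \<in> HomH R1 d1 R2 d2 n"
  unfolding HomH_def by (simp add: mapply_zero Rop_zero)

lemma HomH_sum_list: "set xs \<subseteq> HomH R1 d1 R2 d2 n \<Longrightarrow> sum_list xs \<in> HomH R1 d1 R2 d2 n"
  by (induction xs) (simp_all add: HomH_zero HomH_add)

definition matrix_of :: "nat \<Rightarrow> nat \<Rightarrow> nat \<Rightarrow> ((nat list \<Rightarrow> 'k::field) \<Rightarrow> nat list \<Rightarrow> 'k)
    \<Rightarrow> nat list \<Rightarrow> nat list \<Rightarrow> 'k" where
  "matrix_of d1 d2 n f = (\<lambda>w u. if w \<in> words d2 n \<and> u \<in> words d1 n then f (unit_vec u) w else 0)"

lemma mapply_matrix_of: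
  assumes f: "hlinear R1 d1 R2 d2 n f" and v: "v \<in> tspace d1 n"
  shows "mapply d1 n (matrix_of d1 d2 n f) v = f v"
proof
  fix w
  note hom = hhom_onD[OF hlinear_hhom_on[OF f]]
  have "f v = f (\<Sum>u\<in>words d1 n. (\<lambda>w. v u * unit_vec u w))" using tspace_expand[OF v] by simp
  also have "\<dots> = (\<Sum>u\<in>words d1 n. f (\<lambda>w. v u * unit_vec u w))"
    by (rule hlinear_sum[OF f]) (simp add: tspace_scale unit_vec_tspace)
  also have "\<dots> = (\<Sum>u\<in>words d1 n. (\<lambda>w. v u * f (unit_vec u) w))"
    by (rule sum.cong[OF refl]) (simp add: hom(2) unit_vec_tspace)
  finally have fv: "f v = (\<Sum>u\<in>words d1 n. (\<lambda>w. v u * f (unit_vec u) w))" .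
  show "mapply d1 n (matrix_of d1 d2 n f) v w = f v w"
  proof (cases "w \<in> words d2 n")
    case True
    then show ?thesis unfolding fv mapply_def matrix_of_def fun_sum_apply
      by (intro sum.cong refl) (simp add: mult.commute)
  next
    case False
    have "f v w = 0" using hlinear_tspace[OF f v] False by (simp add: tspace_def)
    then show ?thesis using False by (simp add: mapply_def matrix_of_def)
  qed
qed

lemma matrix_of_HomH:
  fixes R1 :: "nat \<Rightarrow> nat \<Rightarrow> nat \<Rightarrow> nat \<Rightarrow> 'k::field"
  assumes f: "hlinear R1 d1 R2 d2 n f"
  shows "matrix_of d1 d2 n f \<in> HomH R1 d1 R2 d2 n"
  unfolding HomH_def
proof (intro CollectI conjI allI impI ballI)
  fix w u assume "w \<notin> words d2 n \<or> u \<notin> words d1 n"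
  thus "matrix_of d1 d2 n f w u = 0" by (auto simp: matrix_of_def)
next
  fix i and v :: "nat list \<Rightarrow> 'k" assume i: "Suc i < n" and v: "v \<in> tspace d1 n"
  show "mapply d1 n (matrix_of d1 d2 n f) (Rop R1 d1 n i v) = Rop R2 d2 n i (mapply d1 n (matrix_of d1 d2 n f) v)"
    using mapply_matrix_of[OF f v] mapply_matrix_of[OF f Rop_tspace] hhom_onD(3)[OF hlinear_hhom_on[OF f] i v]
    by simp
qed

lemma mcomp_matrix_of:
  assumes \<alpha>: "hlinear R d R' d' n \<alpha>" and \<beta>: "hlinear R' d' R d n \<beta>"
  shows "mcomp d n (matrix_of d d' n \<alpha>) (matrix_of d' d n \<beta>) w u
    = (if w \<in> words d' n \<and> u \<in> words d' n then \<alpha> (\<beta> (unit_vec u)) w else 0)"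
proof (cases "w \<in> words d' n \<and> u \<in> words d' n")
  case True
  have "\<beta> (unit_vec u) \<in> tspace d n" using hlinear_tspace[OF \<beta> unit_vec_tspace] True by blast
  moreover have "mcomp d n (matrix_of d d' n \<alpha>) (matrix_of d' d n \<beta>) w u
      = mapply d n (matrix_of d d' n \<alpha>) (\<beta> (unit_vec u)) w"
    unfolding mcomp_def mapply_def by (intro sum.cong refl) (use True in \<open>simp add: matrix_of_def\<close>)
  ultimately show ?thesis using mapply_matrix_of[OF \<alpha>] True by simp
next
  case False
  then show ?thesis by (auto simp: mcomp_def matrix_of_def)
qed

definition id_factorization :: "(nat \<Rightarrow> nat \<Rightarrow> nat \<Rightarrow> nat \<Rightarrow> 'k::field) \<Rightarrow> nat
    \<Rightarrow> (nat \<Rightarrow> nat \<Rightarrow> nat \<Rightarrow> nat \<Rightarrow> 'k) \<Rightarrow> nat \<Rightarrow> nat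
    \<Rightarrow> ((nat list \<Rightarrow> nat list \<Rightarrow> 'k) \<times> (nat list \<Rightarrow> nat list \<Rightarrow> 'k)) list \<Rightarrow> bool" where
  "id_factorization R d R' d' n ps \<longleftrightarrow>
     (\<forall>p\<in>set ps. fst p \<in> HomH R d R' d' n \<and> snd p \<in> HomH R' d' R d n)
     \<and> (\<Sum>p\<leftarrow>ps. mcomp d n (fst p) (snd p)) = id_matrix d' n"

lemma ex_id_factorization_if_summands_transfer:
  fixes R R' :: "nat \<Rightarrow> nat \<Rightarrow> nat \<Rightarrow> nat \<Rightarrow> 'k::field"
  assumes "\<forall>U. hsummand R' d' n U \<and> hindec R' d' n U \<longrightarrow> (\<exists>W. hsummand R d n W \<and> hiso R' d' n U R d W)"
  shows "\<exists>ps. id_factorization R d R' d' n ps"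
proof -
  obtain ps where ps: "\<forall>p\<in>set ps. hlinear R d R' d' n (fst p) \<and> hlinear R' d' R d n (snd p)"
    "\<forall>v\<in>tspace d' n. proj_along (tspace d' n) {0} v = (\<Sum>p\<leftarrow>ps. fst p (snd p v))"
    using summand_proj_factors_through[OF assms hcomplement_tspace_zero]
    unfolding proj_factors_through_def by blast
  have lin: "hlinear R d R' d' n (fst p)" "hlinear R' d' R d n (snd p)" if "p \<in> set ps" for p
    using ps(1) that by auto
  have id: "(\<Sum>p\<leftarrow>ps. fst p (snd p v)) = v" if "v \<in> tspace d' n" for v
    using ps(2) proj_along_id[OF hcomplement_tspace_zero that] that by simp
  let ?ms = "map (\<lambda>p. (matrix_of d d' n (fst p), matrix_of d' d n (snd p))) ps"
  have "(\<Sum>p\<leftarrow>?ms. mcomp d n (fst p) (snd p)) w u = id_matrix d' n w u" for w u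
  proof (cases "w \<in> words d' n \<and> u \<in> words d' n")
    case True
    have "(\<Sum>p\<leftarrow>?ms. mcomp d n (fst p) (snd p)) w u
        = (\<Sum>p\<leftarrow>ps. mcomp d n (matrix_of d d' n (fst p)) (matrix_of d' d n (snd p)) w u)"
      by (simp add: fun_sum_list_apply o_def)
    also have "\<dots> = (\<Sum>p\<leftarrow>ps. fst p (snd p (unit_vec u)) w)"
      using True by (intro arg_cong[where f=sum_list] map_cong refl) (simp add: mcomp_matrix_of[OF lin])
    also have "\<dots> = (\<Sum>p\<leftarrow>ps. fst p (snd p (unit_vec u))) w"
      by (simp add: fun_sum_list_apply o_def)
    also have "\<dots> = unit_vec u w" using id[OF unit_vec_tspace] True by simp
    finally show ?thesis using True by (simp add: id_matrix_def unit_vec_def)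
  next
    case False
    have "(\<Sum>p\<leftarrow>?ms. mcomp d n (fst p) (snd p)) w u
        = (\<Sum>p\<leftarrow>ps. mcomp d n (matrix_of d d' n (fst p)) (matrix_of d' d n (snd p)) w u)"
      by (simp add: fun_sum_list_apply o_def)
    also have "\<dots> = (\<Sum>p\<leftarrow>ps. 0)"
      using False by (intro arg_cong[where f=sum_list] map_cong refl) (auto simp: mcomp_matrix_of[OF lin])
    finally show ?thesis using False by (auto simp: id_matrix_def)
  qed
  moreover have "\<forall>p\<in>set ?ms. fst p \<in> HomH R d R' d' n \<and> snd p \<in> HomH R' d' R d n"
    by (auto intro: matrix_of_HomH lin)
  ultimately show ?thesis unfolding id_factorization_def by blast
qed

lemma id_matrix_eq_0_iff: "id_matrix d n = 0 \<longleftrightarrow> words d n = {}"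
  by (auto simp: id_matrix_def fun_eq_iff)

lemma ex_id_factorization_target_empty: "words d' n = {} \<Longrightarrow> \<exists>ps. id_factorization R d R' d' n ps"
  unfolding id_factorization_def by (intro exI[of _ "[]"]) (simp add: id_matrix_eq_0_iff)

lemma id_factorization_source_empty:
  fixes R :: "nat \<Rightarrow> nat \<Rightarrow> nat \<Rightarrow> nat \<Rightarrow> 'k::field"
  assumes "id_factorization R d R' d' n ps" "words d n = {}"
  shows "words d' n = {}"
proof -
  have "(\<Sum>p\<leftarrow>ps. mcomp d n (fst p) (snd p)) = (id_matrix d' n :: nat list \<Rightarrow> nat list \<Rightarrow> 'k)"
    using assms(1) unfolding id_factorization_def by blast
  moreover have "mcomp d n A B = 0" for A B :: "nat list \<Rightarrow> nat list \<Rightarrow> 'k"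
    using assms(2) by (simp add: mcomp_def zero_fun_def)
  ultimately have "id_matrix d' n = (0 :: nat list \<Rightarrow> nat list \<Rightarrow> 'k)"
    by simp
  thus ?thesis by (simp add: id_matrix_eq_0_iff)
qed

definition matrix_unit :: "nat list \<Rightarrow> nat list \<Rightarrow> nat list \<Rightarrow> nat list \<Rightarrow> 'k::field" where
  "matrix_unit a b = (\<lambda>w u. if w = a \<and> u = b then 1 else 0)"

lemma ex_id_factorization_le_1:
  fixes R R' :: "nat \<Rightarrow> nat \<Rightarrow> nat \<Rightarrow> nat \<Rightarrow> 'k::field"
  assumes n: "n \<le> 1" and x: "x \<in> words d n"
  shows "\<exists>ps. id_factorization R d R' d' n ps"
proof -
  obtain ws where ws: "set ws = words d' n" "distinct ws"
    using finite_distinct_list[OF finite_words] by blast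
  let ?ps = "map (\<lambda>a. (matrix_unit a x :: nat list \<Rightarrow> nat list \<Rightarrow> 'k, matrix_unit x a)) ws"
  have "\<forall>p\<in>set ?ps. fst p \<in> HomH R d R' d' n \<and> snd p \<in> HomH R' d' R d n"
    using ws(1) x by (auto simp: HomH_le_1[OF n] matrix_unit_def)
  moreover have "(\<Sum>p\<leftarrow>?ps. mcomp d n (fst p) (snd p)) w u = id_matrix d' n w u" for w u
  proof -
    have unit: "mcomp d n (matrix_unit a x) (matrix_unit x a) w u = (if w = a \<and> u = a then 1 else 0 :: 'k)"
      for a
      unfolding mcomp_def matrix_unit_def using x finite_words[of d n]
      by (simp add: if_distrib[of "\<lambda>x. x * _"] sum.delta cong: if_cong)
    have "(\<Sum>p\<leftarrow>?ps. mcomp d n (fst p) (snd p)) w u = (\<Sum>a\<leftarrow>ws. if w = a \<and> u = a then 1 else 0)"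
      by (simp add: fun_sum_list_apply o_def unit)
    also have "\<dots> = (\<Sum>a\<in>words d' n. if w = a \<and> u = a then 1 else 0)"
      using ws by (simp add: sum_list_distinct_conv_sum_set)
    also have "\<dots> = id_matrix d' n w u"
      by (cases "w = u") (auto simp: id_matrix_def finite_words intro!: sum.neutral)
    finally show ?thesis .
  qed
  ultimately show ?thesis unfolding id_factorization_def by blast
qed

text \<open>For \<open>n \<le> 1\<close> every matrix is \<open>H_n\<close>-linear, so the only obstruction is \<open>V^n = 0\<close>, i.e.
  \<open>n = 1, d = 0\<close>; then the hypothesis at \<open>n = 2\<close> forces \<open>d' = 0\<close> as well.\<close>

lemma ex_id_factorization:
  fixes R R' :: "nat \<Rightarrow> nat \<Rightarrow> nat \<Rightarrow> nat \<Rightarrow> 'k::field"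
  assumes transfer: "\<forall>n>1. \<forall>U. hsummand R' d' n U \<and> hindec R' d' n U
            \<longrightarrow> (\<exists>W. hsummand R d n W \<and> hiso R' d' n U R d W)"
  shows "\<exists>ps. id_factorization R d R' d' n ps"
proof -
  have n_gt_1: "\<exists>ps. id_factorization R d R' d' m ps" if "m > 1" for m
    using transfer that by (blast intro: ex_id_factorization_if_summands_transfer)
  show ?thesis
  proof (cases "n > 1 \<or> words d n \<noteq> {}")
    case True
    then show ?thesis using n_gt_1 ex_id_factorization_le_1 by (meson all_not_in_conv not_less)
  next
    case False
    hence "n = 1" using words_0 by (cases n) auto
    have "[0] \<notin> words d 1" using False \<open>n = 1\<close> by simp
    hence "words d 2 = {}" by (auto simp: words_def numeral_2_eq_2 length_Suc_conv)
    moreover obtain ps where "id_factorization R d R' d' 2 ps" using n_gt_1 by fastforce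
    ultimately have "words d' 2 = {}" by (rule id_factorization_source_empty[rotated])
    hence "[0, 0] \<notin> words d' 2" by simp
    hence "words d' n = {}" using \<open>n = 1\<close> by (auto simp: words_def length_Suc_conv)
    then show ?thesis by (rule ex_id_factorization_target_empty)
  qed
qed

section \<open>The dual of composition\<close>

lemma linfunD:
  assumes "linfun S \<psi>"
  shows "x \<in> S \<Longrightarrow> y \<in> S \<Longrightarrow> \<psi> (x + y) = \<psi> x + \<psi> y" "x \<in> S \<Longrightarrow> \<psi> (\<lambda>w u. c * x w u) = c * \<psi> x"
  using assms unfolding linfun_def plus_fun_def by blast+

lemma linfunI:
  assumes "\<And>x y. x \<in> S \<Longrightarrow> y \<in> S \<Longrightarrow> \<psi> (x + y) = \<psi> x + \<psi> y"
    "\<And>c x. x \<in> S \<Longrightarrow> \<psi> (\<lambda>w u. c * x w u) = c * \<psi> x"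
  shows "linfun S \<psi>"
  using assms unfolding linfun_def plus_fun_def by blast

lemma linfun_HomH_sum_list:
  assumes \<psi>: "linfun (HomH R1 d1 R2 d2 n) \<psi>"
  shows "set xs \<subseteq> HomH R1 d1 R2 d2 n \<Longrightarrow> \<psi> (sum_list xs) = (\<Sum>x\<leftarrow>xs. \<psi> x)"
proof (induction xs)
  case Nil
  have "\<psi> (\<lambda>w u. 0 * 0 w u) = 0 * \<psi> 0" by (rule linfunD(2)[OF \<psi> HomH_zero])
  thus ?case by (simp add: zero_fun_def)
next
  case (Cons x xs)
  hence xs: "set xs \<subseteq> HomH R1 d1 R2 d2 n" and "x \<in> HomH R1 d1 R2 d2 n" "sum_list xs \<in> HomH R1 d1 R2 d2 n"
    using HomH_sum_list by auto
  from linfunD(1)[OF \<psi> this(2,3)] Cons.IH[OF xs] show ?case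
    by (simp only: sum_list.Cons list.map)
qed

lemma cotensorD:
  assumes "cotensor d n X C Y \<Phi>"
  shows "y \<in> Y \<Longrightarrow> linfun X (\<lambda>x. \<Phi> x y)" "x \<in> X \<Longrightarrow> linfun Y (\<Phi> x)"
    "f \<in> X \<Longrightarrow> g \<in> C \<Longrightarrow> h \<in> Y \<Longrightarrow> \<Phi> (mcomp d n f g) h = \<Phi> f (mcomp d n g h)"
  using assms unfolding cotensor_def bilin_def by blast+

lemma cotensor_delta:
  fixes R :: "nat \<Rightarrow> nat \<Rightarrow> nat \<Rightarrow> nat \<Rightarrow> 'k::field"
  assumes \<psi>: "linfun (HomH R'' d'' R' d' n) \<psi>"
  shows "cotensor d n (HomH R d R' d' n) (HomH R d R d n) (HomH R'' d'' R d n) (delta d n \<psi>)"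
  unfolding cotensor_def bilin_def
proof (intro conjI ballI)
  fix y assume "y \<in> HomH R'' d'' R d n"
  thus "linfun (HomH R d R' d' n) (\<lambda>x. delta d n \<psi> x y)"
    unfolding delta_def
    by (intro linfunI) (simp_all add: mcomp_add_left mcomp_scale_left linfunD[OF \<psi>] mcomp_HomH)
next
  fix x assume "x \<in> HomH R d R' d' n"
  thus "linfun (HomH R'' d'' R d n) (delta d n \<psi> x)"
    unfolding delta_def
    by (intro linfunI) (simp_all add: mcomp_add_right mcomp_scale_right linfunD[OF \<psi>] mcomp_HomH)
qed (simp add: delta_def mcomp_assoc)

lemma HomH_id_factorization_expand:
  assumes ps: "id_factorization R d R' d' n ps" and z: "z \<in> HomH R'' d'' R' d' n"
  shows "z = (\<Sum>p\<leftarrow>ps. mcomp d n (fst p) (mcomp d' n (snd p) z))"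
proof -
  have "z = mcomp d' n (id_matrix d' n) z"
    using mcomp_id_matrix_left HomH_vanishes[OF z] by metis
  also have "\<dots> = mcomp d' n (\<Sum>p\<leftarrow>ps. mcomp d n (fst p) (snd p)) z"
    using ps unfolding id_factorization_def by simp
  also have "\<dots> = (\<Sum>p\<leftarrow>ps. mcomp d n (fst p) (mcomp d' n (snd p) z))"
    by (simp add: mcomp_sum_list_left o_def mcomp_assoc)
  finally show ?thesis .
qed

lemma linfun_id_factorization_expand:
  assumes ps: "id_factorization R d R' d' n ps" and \<psi>: "linfun (HomH R'' d'' R' d' n) \<psi>"
    and z: "z \<in> HomH R'' d'' R' d' n"
  shows "\<psi> z = (\<Sum>p\<leftarrow>ps. \<psi> (mcomp d n (fst p) (mcomp d' n (snd p) z)))"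
proof -
  have "set (map (\<lambda>p. mcomp d n (fst p) (mcomp d' n (snd p) z)) ps) \<subseteq> HomH R'' d'' R' d' n"
    using ps z unfolding id_factorization_def by (auto intro!: mcomp_HomH)
  from linfun_HomH_sum_list[OF \<psi> this] HomH_id_factorization_expand[OF ps z]
  show ?thesis by (simp add: o_def)
qed

lemma linfun_eq_if_delta_eq:
  assumes ps: "id_factorization R d R' d' n ps"
    and \<psi>: "linfun (HomH R'' d'' R' d' n) \<psi>1" "linfun (HomH R'' d'' R' d' n) \<psi>2"
    and eq: "\<forall>f\<in>HomH R d R' d' n. \<forall>h\<in>HomH R'' d'' R d n. delta d n \<psi>1 f h = delta d n \<psi>2 f h"
    and z: "z \<in> HomH R'' d'' R' d' n"
  shows "\<psi>1 z = \<psi>2 z"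
proof -
  have "\<psi>1 (mcomp d n (fst p) (mcomp d' n (snd p) z)) = \<psi>2 (mcomp d n (fst p) (mcomp d' n (snd p) z))"
    if "p \<in> set ps" for p
  proof -
    have "fst p \<in> HomH R d R' d' n" "snd p \<in> HomH R' d' R d n"
      using ps that unfolding id_factorization_def by auto
    from eq[rule_format, OF this(1) mcomp_HomH[OF this(2) z]] show ?thesis
      unfolding delta_def .
  qed
  thus ?thesis
    using linfun_id_factorization_expand[OF ps \<psi>(1) z] linfun_id_factorization_expand[OF ps \<psi>(2) z]
    by (simp cong: map_cong)
qed

lemma linfun_cotensor_contract:
  fixes R :: "nat \<Rightarrow> nat \<Rightarrow> nat \<Rightarrow> nat \<Rightarrow> 'k::field"
  assumes ps: "id_factorization R d R' d' n ps"
    and \<Phi>: "cotensor d n (HomH R d R' d' n) (HomH R d R d n) (HomH R'' d'' R d n) \<Phi>"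
  shows "linfun (HomH R'' d'' R' d' n) (\<lambda>z. \<Sum>p\<leftarrow>ps. \<Phi> (fst p) (mcomp d' n (snd p) z))"
proof -
  have fac: "fst p \<in> HomH R d R' d' n" "snd p \<in> HomH R' d' R d n" if "p \<in> set ps" for p
    using ps that unfolding id_factorization_def by auto
  note lin = linfunD[OF cotensorD(2)[OF \<Phi>]]
  show ?thesis
  proof (rule linfunI)
    fix z1 z2 assume z: "z1 \<in> HomH R'' d'' R' d' n" "z2 \<in> HomH R'' d'' R' d' n"
    have "(\<Sum>p\<leftarrow>ps. \<Phi> (fst p) (mcomp d' n (snd p) (z1 + z2)))
        = (\<Sum>p\<leftarrow>ps. \<Phi> (fst p) (mcomp d' n (snd p) z1) + \<Phi> (fst p) (mcomp d' n (snd p) z2))"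
      unfolding mcomp_add_right
      by (intro arg_cong[where f=sum_list] map_cong refl lin(1) fac mcomp_HomH[OF fac(2)] z)
    thus "(\<Sum>p\<leftarrow>ps. \<Phi> (fst p) (mcomp d' n (snd p) (z1 + z2)))
        = (\<Sum>p\<leftarrow>ps. \<Phi> (fst p) (mcomp d' n (snd p) z1)) + (\<Sum>p\<leftarrow>ps. \<Phi> (fst p) (mcomp d' n (snd p) z2))"
      by (simp add: sum_list_addf)
  next
    fix c z assume z: "z \<in> HomH R'' d'' R' d' n"
    have "(\<Sum>p\<leftarrow>ps. \<Phi> (fst p) (mcomp d' n (snd p) (\<lambda>w u. c * z w u)))
        = (\<Sum>p\<leftarrow>ps. c * \<Phi> (fst p) (mcomp d' n (snd p) z))"
      unfolding mcomp_scale_right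
      by (intro arg_cong[where f=sum_list] map_cong refl lin(2) fac mcomp_HomH[OF fac(2)] z)
    thus "(\<Sum>p\<leftarrow>ps. \<Phi> (fst p) (mcomp d' n (snd p) (\<lambda>w u. c * z w u)))
        = c * (\<Sum>p\<leftarrow>ps. \<Phi> (fst p) (mcomp d' n (snd p) z))"
      by (simp add: sum_list_const_mult)
  qed
qed

lemma cotensor_eq_delta:
  fixes R :: "nat \<Rightarrow> nat \<Rightarrow> nat \<Rightarrow> nat \<Rightarrow> 'k::field"
  assumes ps: "id_factorization R d R' d' n ps"
    and \<Phi>: "cotensor d n (HomH R d R' d' n) (HomH R d R d n) (HomH R'' d'' R d n) \<Phi>"
  shows "\<exists>\<psi>. linfun (HomH R'' d'' R' d' n) \<psi>
    \<and> (\<forall>f\<in>HomH R d R' d' n. \<forall>h\<in>HomH R'' d'' R d n. \<Phi> f h = delta d n \<psi> f h)"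
proof (intro exI conjI ballI)
  let ?\<psi> = "\<lambda>z. \<Sum>p\<leftarrow>ps. \<Phi> (fst p) (mcomp d' n (snd p) z)"
  show "linfun (HomH R'' d'' R' d' n) ?\<psi>" by (rule linfun_cotensor_contract[OF ps \<Phi>])
  have fac: "fst p \<in> HomH R d R' d' n" "snd p \<in> HomH R' d' R d n" if "p \<in> set ps" for p
    using ps that unfolding id_factorization_def by auto
  fix f h assume f: "f \<in> HomH R d R' d' n" and h: "h \<in> HomH R'' d'' R d n"
  have "delta d n ?\<psi> f h = (\<Sum>p\<leftarrow>ps. \<Phi> (fst p) (mcomp d n (mcomp d' n (snd p) f) h))"
    by (simp add: delta_def mcomp_assoc)
  also have "\<dots> = (\<Sum>p\<leftarrow>ps. \<Phi> (mcomp d' n (mcomp d n (fst p) (snd p)) f) h)"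
    by (intro arg_cong[where f=sum_list] map_cong refl)
      (simp add: mcomp_assoc cotensorD(3)[OF \<Phi> fac(1) mcomp_HomH[OF fac(2) f] h])
  also have "\<dots> = \<Phi> (\<Sum>p\<leftarrow>ps. mcomp d' n (mcomp d n (fst p) (snd p)) f) h"
  proof -
    have "set (map (\<lambda>p. mcomp d' n (mcomp d n (fst p) (snd p)) f) ps) \<subseteq> HomH R d R' d' n"
      using fac f by (auto intro!: mcomp_HomH)
    from linfun_HomH_sum_list[OF cotensorD(1)[OF \<Phi> h] this] show ?thesis
      by (simp add: o_def)
  qed
  also have "\<dots> = \<Phi> (mcomp d' n (\<Sum>p\<leftarrow>ps. mcomp d n (fst p) (snd p)) f) h"
    by (simp add: mcomp_sum_list_left o_def)
  also have "\<dots> = \<Phi> (mcomp d' n (id_matrix d' n) f) h"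
    using ps unfolding id_factorization_def by simp
  also have "\<dots> = \<Phi> f h"
    using mcomp_id_matrix_left HomH_vanishes[OF f] by metis
  finally show "\<Phi> f h = delta d n ?\<psi> f h" by simp
qed

theorem lemma7p1:
  fixes q :: "'k::field" and d d' d'' :: nat
    and R R' R'' :: "nat \<Rightarrow> nat \<Rightarrow> nat \<Rightarrow> nat \<Rightarrow> 'k"
  assumes "hecke_symmetry q d R" and "hecke_symmetry q d' R'" and "hecke_symmetry q d'' R''"
    and "\<forall>n>1. \<forall>U. hsummand R' d' n U \<and> hindec R' d' n U
            \<longrightarrow> (\<exists>W. hsummand R d n W \<and> hiso R' d' n U R d W)"
  shows "\<forall>n. (\<forall>\<psi>. linfun (HomH R'' d'' R' d' n) \<psi>
                 \<longrightarrow> cotensor d n (HomH R d R' d' n) (HomH R d R d n) (HomH R'' d'' R d n) (delta d n \<psi>))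
           \<and> (\<forall>\<psi>1 \<psi>2. linfun (HomH R'' d'' R' d' n) \<psi>1 \<and> linfun (HomH R'' d'' R' d' n) \<psi>2
                 \<and> (\<forall>f\<in>HomH R d R' d' n. \<forall>h\<in>HomH R'' d'' R d n. delta d n \<psi>1 f h = delta d n \<psi>2 f h)
                 \<longrightarrow> (\<forall>z\<in>HomH R'' d'' R' d' n. \<psi>1 z = \<psi>2 z))
           \<and> (\<forall>\<Phi>. cotensor d n (HomH R d R' d' n) (HomH R d R d n) (HomH R'' d'' R d n) \<Phi>
                 \<longrightarrow> (\<exists>\<psi>. linfun (HomH R'' d'' R' d' n) \<psi>
                       \<and> (\<forall>f\<in>HomH R d R' d' n. \<forall>h\<in>HomH R'' d'' R d n. \<Phi> f h = delta d n \<psi> f h)))"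
proof (intro allI conjI impI ballI)
  fix n
  obtain ps where ps: "id_factorization R d R' d' n ps"
    using ex_id_factorization[OF assms(4)] by blast
  show "cotensor d n (HomH R d R' d' n) (HomH R d R d n) (HomH R'' d'' R d n) (delta d n \<psi>)"
    if "linfun (HomH R'' d'' R' d' n) \<psi>" for \<psi>
    using that by (rule cotensor_delta)
  show "\<psi>1 z = \<psi>2 z"
    if "linfun (HomH R'' d'' R' d' n) \<psi>1 \<and> linfun (HomH R'' d'' R' d' n) \<psi>2
        \<and> (\<forall>f\<in>HomH R d R' d' n. \<forall>h\<in>HomH R'' d'' R d n. delta d n \<psi>1 f h = delta d n \<psi>2 f h)"
      and "z \<in> HomH R'' d'' R' d' n" for \<psi>1 \<psi>2 z
    using linfun_eq_if_delta_eq[OF ps] that by blast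
  show "\<exists>\<psi>. linfun (HomH R'' d'' R' d' n) \<psi>
      \<and> (\<forall>f\<in>HomH R d R' d' n. \<forall>h\<in>HomH R'' d'' R d n. \<Phi> f h = delta d n \<psi> f h)"
    if "cotensor d n (HomH R d R' d' n) (HomH R d R d n) (HomH R'' d'' R d n) \<Phi>" for \<Phi>
    using ps that by (rule cotensor_eq_delta)
qed

end
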